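(* Define the relative prudence function $$p(x,t):=-\frac{x\,u_{xxx}(x,t)}{u_{xx}(x,t)},\qquad (x,t)\in(0,\infty)\times[0,\infty).$$ Then $p(x,t)>0$ for all $(x,t)$. Moreover: (i) If $\gamma<1$ and $\lim_{x\uparrow\infty}u_0'(x)/x^{\gamma-1}=1$, then for each $t_0\ge0$, $$\lim_{x\uparrow\infty}p(x,t_0)=2-\gamma.$$ (ii) Suppose $\gamma<1$, $\gamma\ne0$, and the following hold: for all $\gamma'\in(\gamma,1)$, $\lim_{x\uparrow\infty}u_0'(x)/x^{\gamma'-1}=0$, and for all $\gamma''<\gamma$, $\lim_{x\uparrow\infty}u_0'(x)/x^{\gamma''-1}=\infty$. Then for each $x_0>0$, $$\lim_{t\uparrow\infty}p(x_0,t)=\begin{cases}1+\frac1a, & a>0,\\ \infty, & a=0.\end{cases}$$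
   Context: Let $\mu$ be a nonzero finite positive Borel measure on $(0,\infty)$ such that $\int y e^{yz}\mu(dy)<\infty$ for every $z\in\mathbb{R}$. Let $a:=\inf\{y\ge 0:\mu((0,y])>0\}$ be the left end point of its support. Define $h(z,t):=\int e^{yz-\frac12 y^2 t}\mu(dy)$ for $(z,t)\in\mathbb{R}\times[0,\infty)$. For each $t$, the map $z\mapsto h(z,t)$ is smooth and strictly increasing with range $(0,\infty)$, and $h_t+\frac12 h_{zz}=0$. Let $u:(0,\infty)\times[0,\infty)\to\mathbb{R}$ be smooth, strictly increasing and strictly concave in $x$, solving $u_t=\frac12 u_x^2/u_{xx}$, and related to $h$ by $u_x(h(z,t),t)=e^{-z+t/2}$ for all $(z,t)$. Write $u_0(x):=u(x,0)$. *)

theory Defs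
  imports "HOL-Analysis.Analysis" "HOL-Probability.Probability"
begin

definition ux :: "(real \<Rightarrow> real \<Rightarrow> real) \<Rightarrow> real \<Rightarrow> real \<Rightarrow> real" where
  "ux u x t = deriv (\<lambda>y. u y t) x"

definition uxx :: "(real \<Rightarrow> real \<Rightarrow> real) \<Rightarrow> real \<Rightarrow> real \<Rightarrow> real" where
  "uxx u x t = deriv (\<lambda>y. ux u y t) x"

definition uxxx :: "(real \<Rightarrow> real \<Rightarrow> real) \<Rightarrow> real \<Rightarrow> real \<Rightarrow> real" where
  "uxxx u x t = deriv (\<lambda>y. uxx u y t) x"

definition ut :: "(real \<Rightarrow> real \<Rightarrow> real) \<Rightarrow> real \<Rightarrow> real \<Rightarrow> real" where
  "ut u x t = vector_derivative (\<lambda>s. u x s) (at t within {0..})"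

text \<open>Smoothness (C-infinity) on (0,oo) x [0,oo): a family F i j of all mixed partial
  derivatives (i-th in x, j-th in t) exists, each jointly continuous.\<close>
definition smooth_quadrant :: "(real \<Rightarrow> real \<Rightarrow> real) \<Rightarrow> bool" where
  "smooth_quadrant u \<longleftrightarrow> (\<exists>F :: nat \<Rightarrow> nat \<Rightarrow> real \<Rightarrow> real \<Rightarrow> real. F 0 0 = u \<and>
     (\<forall>i j. \<forall>x>0. \<forall>t\<ge>0.
        ((\<lambda>y. F i j y t) has_real_derivative F (Suc i) j x t) (at x) \<and>
        ((\<lambda>s. F i j x s) has_real_derivative F i (Suc j) x t) (at t within {0..}) \<and>
        continuous (at (x, t) within ({0<..} \<times> {0..})) (\<lambda>(y, s). F i j y s)))"

definition strictly_concave_on :: "real set \<Rightarrow> (real \<Rightarrow> real) \<Rightarrow> bool" where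
  "strictly_concave_on S f \<longleftrightarrow> (\<forall>x\<in>S. \<forall>y\<in>S. x \<noteq> y \<longrightarrow> (\<forall>\<theta>::real. 0 < \<theta> \<and> \<theta> < 1 \<longrightarrow>
      f ((1 - \<theta>) * x + \<theta> * y) > (1 - \<theta>) * f x + \<theta> * f y))"

definition prudence :: "(real \<Rightarrow> real \<Rightarrow> real) \<Rightarrow> real \<Rightarrow> real \<Rightarrow> real" where
  "prudence u x t = - (x * uxxx u x t / uxx u x t)"

end

theory Submission
  imports Defs
begin

text \<open>
  Write \<open>H k z t = \<integral> y\<^sup>k exp (y z - y\<^sup>2 t / 2) d\<mu>\<close>, the \<open>k\<close>-th \<open>z\<close>-derivative of \<open>h = H 0\<close>.
  Differentiating \<open>u\<^sub>x (h z t) t = exp (t / 2 - z)\<close> twice in \<open>z\<close> gives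
  \<open>p (h z t) t = H 0 (H 1 + H 2) / H 1\<^sup>2\<close>, which is positive. In terms of the moments
  \<open>m\<^sub>k = H k / H 0\<close> of the probability measure proportional to \<open>exp (y z - y\<^sup>2 t / 2) \<mu>(dy)\<close>
  this reads \<open>p = (m\<^sub>1 + m\<^sub>2) / m\<^sub>1\<^sup>2\<close>, and both limits come from that measure concentrating
  at a single point \<open>c\<close>, where \<open>p \<rightarrow> 1 + 1 / c\<close>.

  (i) With \<open>b = 1 / (1 - \<gamma>)\<close> the hypothesis on \<open>u\<^sub>0'\<close> says \<open>h z 0 \<sim> exp (b z)\<close>. This forces
  \<open>\<mu>\<close> to live on \<open>(0, b]\<close> with an atom of mass one at \<open>b\<close>, so as \<open>x \<rightarrow> \<infinity>\<close> (that is,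
  \<open>z \<rightarrow> \<infinity>\<close>) the measure concentrates at \<open>c = b\<close>, and \<open>1 + 1 / b = 2 - \<gamma>\<close>.

  (ii) For fixed \<open>x\<close>, the solution \<open>z\<close> of \<open>h z t = x\<close> eventually satisfies
  \<open>z \<le> (a + \<delta>) t\<close>, since otherwise the mass of \<open>\<mu>\<close> near \<open>a\<close> would make \<open>h z t\<close> huge.
  Then the exponents \<open>y \<ge> a + \<delta>\<close> lose a factor \<open>exp (- \<delta>\<^sup>2 t / 8)\<close> against those near \<open>a\<close>,
  and the measure concentrates at \<open>c = a\<close>; for \<open>a = 0\<close> this means \<open>m\<^sub>1 \<rightarrow> 0\<close> and \<open>p \<rightarrow> \<infinity>\<close>.
\<close>

section \<open>Differentiation under the integral sign\<close>

lemma difference_quotient_bound: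
  fixes g g' :: "real \<Rightarrow> real"
  assumes der: "\<And>z. z \<in> ball z0 r \<Longrightarrow> (g has_real_derivative g' z) (at z) \<and> \<bar>g' z\<bar> \<le> B"
    and d: "d \<noteq> 0" "\<bar>d\<bar> < r"
  shows "\<bar>(g (z0 + d) - g z0) / d\<bar> \<le> B"
proof -
  have "norm (g (z0 + d) - g z0) \<le> B * norm (z0 + d - z0)"
  proof (rule field_differentiable_bound[of "ball z0 r" g g' B "z0 + d" z0])
    show "(g has_field_derivative g' z) (at z within ball z0 r)" if "z \<in> ball z0 r" for z
      using der[OF that] has_field_derivative_at_within by blast
    show "norm (g' z) \<le> B" if "z \<in> ball z0 r" for z
      unfolding real_norm_def using der[OF that] by blast
  qed (use d in \<open>auto simp: dist_real_def\<close>)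
  then show ?thesis
    using d by (simp add: abs_divide pos_divide_le_eq)
qed

lemma has_real_derivative_integral:
  fixes M :: "'a measure" and f f' :: "'a \<Rightarrow> real \<Rightarrow> real" and w :: "'a \<Rightarrow> real"
  assumes r: "r > 0"
    and int: "\<And>z. integrable M (\<lambda>y. f y z)"
    and meas': "(\<lambda>y. f' y z0) \<in> borel_measurable M"
    and der: "AE y in M. \<forall>z\<in>ball z0 r. (f y has_real_derivative f' y z) (at z) \<and> \<bar>f' y z\<bar> \<le> w y"
    and intw: "integrable M w"
  shows "((\<lambda>z. \<integral>y. f y z \<partial>M) has_real_derivative (\<integral>y. f' y z0 \<partial>M)) (at z0)"
  unfolding DERIV_def tendsto_at_iff_sequentially comp_def
proof (intro allI impI)
  fix X :: "nat \<Rightarrow> real"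
  assume X0: "\<forall>i. X i \<in> UNIV - {0}" and X: "X \<longlonglongrightarrow> 0"
  from X r obtain N where N: "\<And>n. n \<ge> N \<Longrightarrow> \<bar>X n\<bar> < r"
    unfolding LIMSEQ_iff by (metis real_norm_def diff_zero)
  define q where "q n y = (f y (z0 + X n) - f y z0) / X n" for n y
  have "(\<lambda>n. \<integral>y. q (n + N) y \<partial>M) \<longlonglongrightarrow> (\<integral>y. f' y z0 \<partial>M)"
  proof (rule integral_dominated_convergence[where w = w])
    show "\<And>n. (\<lambda>y. q (n + N) y) \<in> borel_measurable M"
      unfolding q_def using int by (intro borel_measurable_divide borel_measurable_diff) auto
    show "AE y in M. (\<lambda>n. q (n + N) y) \<longlonglongrightarrow> f' y z0"
      using der
    proof eventually_elim
      case (elim y)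
      then have "(\<lambda>d. (f y (z0 + d) - f y z0) / d) \<midarrow>0\<rightarrow> f' y z0"
        using r DERIV_def by force
      then have "(\<lambda>n. q n y) \<longlonglongrightarrow> f' y z0"
        unfolding q_def tendsto_at_iff_sequentially comp_def using X0 X by blast
      then show ?case by (rule LIMSEQ_ignore_initial_segment)
    qed
    show "AE y in M. norm (q (n + N) y) \<le> w y" for n
      using der
    proof eventually_elim
      case (elim y)
      show ?case
        using difference_quotient_bound[of z0 r "f y" "f' y" "w y" "X (n + N)"] elim X0 N[of "n + N"]
        unfolding q_def by simp
    qed
  qed (fact meas' intw)+
  then have "(\<lambda>n. \<integral>y. q n y \<partial>M) \<longlonglongrightarrow> (\<integral>y. f' y z0 \<partial>M)"
    by (rule LIMSEQ_offset)
  moreover have "((\<integral>y. f y (z0 + X n) \<partial>M) - (\<integral>y. f y z0 \<partial>M)) / X n = (\<integral>y. q n y \<partial>M)" for n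
    unfolding q_def using int by simp
  ultimately show "(\<lambda>n. ((\<integral>y. f y (z0 + X n) \<partial>M) - (\<integral>y. f y z0 \<partial>M)) / X n)
      \<longlonglongrightarrow> (\<integral>y. f' y z0 \<partial>M)"
    by simp
qed

lemma measure_mult_le_integral:
  fixes f :: "'a \<Rightarrow> real"
  assumes f: "integrable M f" "AE y in M. 0 \<le> f y" and A: "A \<in> sets M"
    and c: "c \<ge> 0" "\<And>y. y \<in> A \<Longrightarrow> c \<le> f y"
  shows "c * measure M A \<le> (\<integral>y. f y \<partial>M)"
proof -
  have "c * measure M A = (\<integral>y. c * indicator A y \<partial>M)"
    using A sets.Int_space_eq2 by simp
  also have "\<dots> \<le> (\<integral>y. f y \<partial>M)"
  proof (rule integral_mono_AE')
    show "AE y in M. c * indicator A y \<le> f y"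
      using f(2) by eventually_elim (auto simp: indicator_def c)
  qed (fact f)+
  finally show ?thesis .
qed

lemma emeasure_lessThan_eq_0:
  fixes M :: "real measure"
  assumes "sets M = sets borel" and null: "\<And>y. y < b \<Longrightarrow> emeasure M {..y} = 0"
  shows "emeasure M {..<b} = 0"
proof -
  have "{..<b} = (\<Union>n. {..b - 1 / Suc n})"
  proof (intro equalityI subsetI)
    fix x assume "x \<in> {..<b}"
    then have "x < b" by simp
    then obtain n where "inverse (real (Suc n)) < b - x"
      using reals_Archimedean diff_gt_0_iff_gt by blast
    then have "x \<le> b - 1 / Suc n"
      by (simp add: inverse_eq_divide)
    then show "x \<in> (\<Union>n. {..b - 1 / Suc n})"
      by blast
  next
    fix x assume "x \<in> (\<Union>n. {..b - 1 / Suc n})"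
    then obtain n where "x \<le> b - 1 / Suc n"
      by auto
    moreover have "1 / real (Suc n) > 0"
      by simp
    ultimately show "x \<in> {..<b}"
      unfolding lessThan_iff by linarith
  qed
  also have "emeasure M \<dots> = 0"
    using null assms(1) by (intro emeasure_UN_eq_0) auto
  finally show ?thesis .
qed

lemma emeasure_greaterThan_eq_0:
  fixes M :: "real measure"
  assumes "sets M = sets borel" and null: "\<And>c. b < c \<Longrightarrow> emeasure M {c..} = 0"
  shows "emeasure M {b<..} = 0"
proof -
  have "{b<..} = (\<Union>n. {b + 1 / Suc n..})"
  proof (intro equalityI subsetI)
    fix x assume "x \<in> {b<..}"
    then have "b < x" by simp
    then obtain n where "inverse (real (Suc n)) < x - b"
      using reals_Archimedean diff_gt_0_iff_gt by blast
    then have "b + 1 / Suc n \<le> x"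
      by (simp add: inverse_eq_divide)
    then show "x \<in> (\<Union>n. {b + 1 / Suc n..})"
      by blast
  next
    fix x assume "x \<in> (\<Union>n. {b + 1 / Suc n..})"
    then obtain n where "b + 1 / Suc n \<le> x"
      by auto
    moreover have "1 / real (Suc n) > 0"
      by simp
    ultimately show "x \<in> {b<..}"
      unfolding greaterThan_iff by linarith
  qed
  also have "emeasure M \<dots> = 0"
    using null assms(1) by (intro emeasure_UN_eq_0) auto
  finally show ?thesis .
qed

lemma quadratic_exponent_ge_min_endpoints:
  fixes s0 s1 s z t :: real
  assumes "t \<ge> 0" "s0 \<le> s" "s \<le> s1"
  shows "min (s0 * z - s0\<^sup>2 * t / 2) (s1 * z - s1\<^sup>2 * t / 2) \<le> s * z - s\<^sup>2 * t / 2"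
proof -
  have e0: "(s * z - s\<^sup>2 * t / 2) - (s0 * z - s0\<^sup>2 * t / 2) = (s - s0) * (z - (s + s0) * t / 2)"
    and e1: "(s * z - s\<^sup>2 * t / 2) - (s1 * z - s1\<^sup>2 * t / 2) = (s - s1) * (z - (s + s1) * t / 2)"
    by (simp_all add: field_simps power2_eq_square)
  show ?thesis
  proof (cases "z \<ge> (s + s0) * t / 2")
    case True
    then show ?thesis using e0 assms by (smt (verit) mult_nonneg_nonneg)
  next
    case False
    have "(s + s0) * t \<le> (s + s1) * t"
      using assms by (intro mult_right_mono) auto
    then have "0 \<le> (s - s1) * (z - (s + s1) * t / 2)"
      using False assms by (intro mult_nonpos_nonpos) auto
    then show ?thesis using e1 by linarith
  qed
qed

lemma filterlim_exp_linear_at_top: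
  fixes c d :: real
  assumes "c > 0"
  shows "filterlim (\<lambda>x. exp (c * x + d)) at_top at_top"
  using filterlim_tendsto_add_at_top[OF tendsto_const[of d]
      filterlim_tendsto_pos_mult_at_top[OF tendsto_const assms filterlim_ident]]
  by (intro filterlim_compose[OF exp_at_top]) (simp add: add.commute)

lemma tendsto_exp_linear_0:
  fixes c d :: real
  assumes "c > 0"
  shows "((\<lambda>x. exp (d - c * x)) \<longlongrightarrow> 0) at_top"
proof -
  have "filterlim (\<lambda>x. - (c * x + - d)) at_bot at_top"
    using filterlim_tendsto_add_at_top[OF tendsto_const[of "- d"]
        filterlim_tendsto_pos_mult_at_top[OF tendsto_const assms filterlim_ident]]
    by (simp add: filterlim_uminus_at_top add.commute)
  then show ?thesis
    by (intro filterlim_compose[OF exp_at_bot]) simp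
qed

lemma power_add_lt_exists:
  fixes a e :: real
  assumes "e > 0"
  obtains \<delta> where "\<delta> > 0" "(a + \<delta>) ^ k < a ^ k + e"
proof -
  have "((\<lambda>d. (a + d) ^ k) \<longlongrightarrow> (a + 0) ^ k) (at_right 0)"
    by (intro tendsto_intros)
  then have "\<forall>\<^sub>F d in at_right 0. (a + d) ^ k < a ^ k + e"
    using assms by (intro order_tendstoD(2)) auto
  then obtain b where "b > 0" "\<And>d. 0 < d \<Longrightarrow> d < b \<Longrightarrow> (a + d) ^ k < a ^ k + e"
    unfolding eventually_at_right_field by auto
  then show ?thesis
    using that[of "b / 2"] by auto
qed

lemma tendsto_power_exp_gap:
  fixes b y t :: real
  assumes "0 < y" "y \<le> b"
  shows "((\<lambda>z. y ^ k * exp ((b\<^sup>2 - y\<^sup>2) * t / 2 - (b - y) * z)) \<longlongrightarrow> b ^ k * indicator {b} y) at_top"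
proof (cases "y = b")
  case False
  then have "b - y > 0"
    using assms by simp
  then show ?thesis
    using False tendsto_mult_right_zero[OF tendsto_exp_linear_0] by simp
qed simp

lemma power_exp_gap_le:
  fixes b y z t :: real
  assumes "0 < y" "y \<le> b" "z \<ge> 0" "t \<ge> 0"
  shows "norm (y ^ k * exp ((b\<^sup>2 - y\<^sup>2) * t / 2 - (b - y) * z)) \<le> b ^ k * exp (b\<^sup>2 * t / 2)"
proof -
  have "0 \<le> (b - y) * z" "0 \<le> y\<^sup>2 * t"
    using assms by auto
  moreover have "(b\<^sup>2 - y\<^sup>2) * t / 2 = b\<^sup>2 * t / 2 - y\<^sup>2 * t / 2"
    by (simp add: left_diff_distrib diff_divide_distrib)
  ultimately have "(b\<^sup>2 - y\<^sup>2) * t / 2 - (b - y) * z \<le> b\<^sup>2 * t / 2"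
    by linarith
  then have "exp ((b\<^sup>2 - y\<^sup>2) * t / 2 - (b - y) * z) \<le> exp (b\<^sup>2 * t / 2)"
    by simp
  moreover have "y ^ k \<le> b ^ k"
    using assms by (intro power_mono) auto
  ultimately show ?thesis
    using assms by (simp add: mult_mono)
qed

lemma quadratic_exponent_gap:
  fixes a s y z t \<delta> :: real
  assumes t: "t \<ge> 0" and \<delta>: "\<delta> > 0" and s: "a \<le> s" "s \<le> a + \<delta> / 4"
    and y: "a + \<delta> \<le> y" and z: "z \<le> (a + \<delta> / 4) * t"
  shows "y * z - y\<^sup>2 * t / 2 \<le> (s * z - s\<^sup>2 * t / 2) + - (\<delta>\<^sup>2 / 8 * t)"
proof -
  have "(2 * a + \<delta>) * t \<le> (y + s) * t"
    using y s t by (intro mult_right_mono) auto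
  then have w: "z - (y + s) * t / 2 \<le> - (\<delta> / 4 * t)"
    using z by (simp add: algebra_simps)
  have nonneg: "0 \<le> \<delta> / 4 * t"
    using \<delta> t by simp
  have "(y * z - y\<^sup>2 * t / 2) - (s * z - s\<^sup>2 * t / 2) = (y - s) * (z - (y + s) * t / 2)"
    by (simp add: field_simps power2_eq_square)
  also have "\<dots> \<le> (3 * \<delta> / 4) * (z - (y + s) * t / 2)"
    using y s w nonneg by (intro mult_right_mono_neg) auto
  also have "\<dots> \<le> (3 * \<delta> / 4) * (- (\<delta> / 4 * t))"
    using w \<delta> by (intro mult_left_mono) auto
  also have "\<dots> = - (3 / 16 * (\<delta> * \<delta> * t))"
    by (simp add: field_simps)
  also have "\<dots> \<le> - (\<delta>\<^sup>2 / 8 * t)"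
    using t zero_le_square[of \<delta>] by (simp add: power2_eq_square mult.assoc[symmetric])
  finally show ?thesis
    by simp
qed

lemma smooth_quadrant_has_derivative_ux:
  assumes smooth: "smooth_quadrant u" and x: "x > 0" and t: "t \<ge> 0"
  shows "((\<lambda>y. ux u y t) has_real_derivative uxx u x t) (at x)"
    and "((\<lambda>y. uxx u y t) has_real_derivative uxxx u x t) (at x)"
proof -
  obtain F :: "nat \<Rightarrow> nat \<Rightarrow> real \<Rightarrow> real \<Rightarrow> real" where F0: "F 0 0 = u" and
    FD: "\<And>i x. x > 0 \<Longrightarrow> ((\<lambda>y. F i 0 y t) has_real_derivative F (Suc i) 0 x t) (at x)"
    using smooth t unfolding smooth_quadrant_def by blast
  have ux: "ux u x t = F 1 0 x t" if "x > 0" for x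
    unfolding ux_def using FD[OF that, of 0] F0 by (simp add: DERIV_imp_deriv)
  have d_ux: "((\<lambda>y. ux u y t) has_real_derivative F 2 0 x t) (at x)" if "x > 0" for x
  proof (rule has_field_derivative_transform_within_open[where S = "{0<..}"])
    show "((\<lambda>y. F 1 0 y t) has_real_derivative F 2 0 x t) (at x)"
      using FD[OF that, of 1] by (simp add: numeral_2_eq_2)
  qed (use that ux in auto)
  have uxx: "uxx u x t = F 2 0 x t" if "x > 0" for x
    unfolding uxx_def using d_ux[OF that] by (rule DERIV_imp_deriv)
  have d_uxx: "((\<lambda>y. uxx u y t) has_real_derivative F 3 0 x t) (at x)" if "x > 0" for x
  proof (rule has_field_derivative_transform_within_open[where S = "{0<..}"])
    show "((\<lambda>y. F 2 0 y t) has_real_derivative F 3 0 x t) (at x)"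
      using FD[OF that, of 2] by (simp add: numeral_3_eq_3 numeral_2_eq_2)
  qed (use that uxx in auto)
  have uxxx: "uxxx u x t = F 3 0 x t" if "x > 0" for x
    unfolding uxxx_def using d_uxx[OF that] by (rule DERIV_imp_deriv)
  show "((\<lambda>y. ux u y t) has_real_derivative uxx u x t) (at x)"
    using d_ux[OF x] uxx[OF x] by simp
  show "((\<lambda>y. uxx u y t) has_real_derivative uxxx u x t) (at x)"
    using d_uxx[OF x] uxxx[OF x] by simp
qed

section \<open>The transform \<open>h\<close> and its derivatives in \<open>z\<close>\<close>

locale exp_integrable_measure = finite_measure \<mu> for \<mu> :: "real measure" +
  assumes sets_mu: "sets \<mu> = sets borel"
    and supp: "emeasure \<mu> {..0} = 0"
    and nonzero: "emeasure \<mu> (space \<mu>) \<noteq> 0"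
    and integr: "\<And>z. integrable \<mu> (\<lambda>y. y * exp (y * z))"
begin

definition H :: "nat \<Rightarrow> real \<Rightarrow> real \<Rightarrow> real" where
  "H k z t = (\<integral>y. y ^ k * exp (y * z - y\<^sup>2 * t / 2) \<partial>\<mu>)"

lemma space_eq_UNIV: "space \<mu> = UNIV"
  using sets_eq_imp_space_eq[OF sets_mu] by simp

lemma borel_measurable_mu_iff:
  "(f :: real \<Rightarrow> real) \<in> borel_measurable \<mu> \<longleftrightarrow> f \<in> borel_measurable borel"
  by (simp add: measurable_cong_sets[OF sets_mu refl])

lemma AE_pos: "AE y in \<mu>. 0 < y"
proof (rule AE_I'[of "{..0}"])
  show "{..0} \<in> null_sets \<mu>"
    using supp sets_mu by (simp add: null_sets_def)
qed auto

lemma integrable_Suc_power_exp: "integrable \<mu> (\<lambda>y. y ^ Suc k * exp (y * z))"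
proof (induction k arbitrary: z)
  case 0
  then show ?case using integr[of z] by simp
next
  case (Suc k)
  show ?case
  proof (rule Bochner_Integration.integrable_bound[OF Suc.IH[of "z + 1"]])
    show "(\<lambda>y. y ^ Suc (Suc k) * exp (y * z)) \<in> borel_measurable \<mu>"
      unfolding borel_measurable_mu_iff by measurable
    show "AE y in \<mu>. norm (y ^ Suc (Suc k) * exp (y * z)) \<le> norm (y ^ Suc k * exp (y * (z + 1)))"
      using AE_pos
    proof eventually_elim
      case (elim y)
      have "y \<le> exp y"
        using exp_ge_add_one_self[of y] by linarith
      then have "y ^ Suc k * exp (y * z) * y \<le> y ^ Suc k * exp (y * z) * exp y"
        using elim by (intro mult_left_mono) auto
      then show ?case
        using elim by (simp add: abs_mult exp_add distrib_left mult_ac)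
    qed
  qed
qed

text \<open>For \<open>k = 0\<close> split at \<open>y = 1\<close>: below, \<open>exp (y * z) \<le> exp \<bar>z\<bar>\<close>; above, \<open>exp (y * z) \<le> y * exp (y * z)\<close>.\<close>

lemma integrable_power_exp: "integrable \<mu> (\<lambda>y. y ^ k * exp (y * z))"
proof (cases k)
  case (Suc m)
  then show ?thesis using integrable_Suc_power_exp by simp
next
  case 0
  have "integrable \<mu> (\<lambda>y. exp \<bar>z\<bar> + y * exp (y * z))"
    using integr[of z] by simp
  then show ?thesis
  proof (rule Bochner_Integration.integrable_bound)
    show "(\<lambda>y. y ^ k * exp (y * z)) \<in> borel_measurable \<mu>"
      unfolding borel_measurable_mu_iff by measurable
    show "AE y in \<mu>. norm (y ^ k * exp (y * z)) \<le> norm (exp \<bar>z\<bar> + y * exp (y * z))"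
      using AE_pos
    proof eventually_elim
      case (elim y)
      have "exp (y * z) \<le> exp \<bar>z\<bar> + y * exp (y * z)"
      proof (cases "y \<ge> 1")
        case True
        then show ?thesis by (simp add: add_increasing)
      next
        case False
        have "y * z \<le> \<bar>z\<bar>"
          using elim False by (smt (verit) mult_left_le_one_le abs_ge_self mult_left_mono)
        then show ?thesis using elim by (smt (verit) exp_le_cancel_iff mult_pos_pos exp_gt_zero)
      qed
      then show ?case using 0 elim by simp
    qed
  qed
qed

lemma integrable_H_integrand:
  assumes t: "t \<ge> 0"
  shows "integrable \<mu> (\<lambda>y. y ^ k * exp (y * z - y\<^sup>2 * t / 2))"
proof (rule Bochner_Integration.integrable_bound[OF integrable_power_exp[of k z]])
  show "(\<lambda>y. y ^ k * exp (y * z - y\<^sup>2 * t / 2)) \<in> borel_measurable \<mu>"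
    unfolding borel_measurable_mu_iff by measurable
  show "AE y in \<mu>. norm (y ^ k * exp (y * z - y\<^sup>2 * t / 2)) \<le> norm (y ^ k * exp (y * z))"
    using AE_pos
  proof eventually_elim
    case (elim y)
    have "exp (y * z - y\<^sup>2 * t / 2) \<le> exp (y * z)"
      using t by simp
    then show ?case using elim by (simp add: abs_mult mult_left_mono)
  qed
qed

lemma has_real_derivative_H:
  assumes t: "t \<ge> 0"
  shows "((\<lambda>z. H k z t) has_real_derivative H (Suc k) z0 t) (at z0)"
  unfolding H_def
proof (rule has_real_derivative_integral[where r = 1 and w = "\<lambda>y. y ^ Suc k * exp (y * (z0 + 1))"])
  show "(\<lambda>y. y ^ Suc k * exp (y * z0 - y\<^sup>2 * t / 2)) \<in> borel_measurable \<mu>"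
    unfolding borel_measurable_mu_iff by measurable
  show "AE y in \<mu>. \<forall>z\<in>ball z0 1.
      ((\<lambda>z. y ^ k * exp (y * z - y\<^sup>2 * t / 2)) has_real_derivative y ^ Suc k * exp (y * z - y\<^sup>2 * t / 2)) (at z)
      \<and> \<bar>y ^ Suc k * exp (y * z - y\<^sup>2 * t / 2)\<bar> \<le> y ^ Suc k * exp (y * (z0 + 1))"
    using AE_pos
  proof eventually_elim
    case (elim y)
    show ?case
    proof
      fix z assume "z \<in> ball z0 1"
      then have "y * z \<le> y * (z0 + 1)"
        using elim by (intro mult_left_mono) (auto simp: dist_real_def)
      moreover have "0 \<le> y\<^sup>2 * t / 2"
        using t by simp
      ultimately have "y * z - y\<^sup>2 * t / 2 \<le> y * (z0 + 1)"
        by linarith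
      then have "\<bar>y ^ Suc k * exp (y * z - y\<^sup>2 * t / 2)\<bar> \<le> y ^ Suc k * exp (y * (z0 + 1))"
        using elim by (simp add: abs_mult mult_left_mono)
      then show "((\<lambda>z. y ^ k * exp (y * z - y\<^sup>2 * t / 2)) has_real_derivative
          y ^ Suc k * exp (y * z - y\<^sup>2 * t / 2)) (at z) \<and>
          \<bar>y ^ Suc k * exp (y * z - y\<^sup>2 * t / 2)\<bar> \<le> y ^ Suc k * exp (y * (z0 + 1))"
        by (auto intro!: derivative_eq_intros simp: algebra_simps)
    qed
  qed
qed (use integrable_H_integrand[OF t] integrable_power_exp[of "Suc k"] in auto)

lemma H_pos:
  assumes t: "t \<ge> 0"
  shows "H k z t > 0"
proof -
  have int: "integrable \<mu> (\<lambda>y. y ^ k * exp (y * z - y\<^sup>2 * t / 2))"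
    using integrable_H_integrand[OF t] .
  have nonneg: "AE y in \<mu>. 0 \<le> y ^ k * exp (y * z - y\<^sup>2 * t / 2)"
    using AE_pos by eventually_elim simp
  have "H k z t \<noteq> 0"
  proof
    assume "H k z t = 0"
    then have "AE y in \<mu>. y ^ k * exp (y * z - y\<^sup>2 * t / 2) = 0"
      using integral_nonneg_eq_0_iff_AE[OF int nonneg] unfolding H_def by simp
    with AE_pos have "AE y in \<mu>. False"
      by eventually_elim simp
    then show False
      using nonzero ae_filter_eq_bot_iff eventually_False by metis
  qed
  moreover have "H k z t \<ge> 0"
    unfolding H_def using nonneg by (rule integral_nonneg_AE)
  ultimately show ?thesis by simp
qed

lemma continuous_on_H: "t \<ge> 0 \<Longrightarrow> continuous_on UNIV (\<lambda>z. H k z t)"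
  using has_real_derivative_H by (meson DERIV_isCont continuous_at_imp_continuous_on)

lemma strict_mono_H: "t \<ge> 0 \<Longrightarrow> strict_mono (\<lambda>z. H k z t)"
  using DERIV_pos_imp_increasing has_real_derivative_H H_pos by (metis strict_monoI)

lemma H0_ge_measure_mult_exp:
  assumes t: "t \<ge> 0" and s: "s0 \<le> s1"
  shows "measure \<mu> {s0..s1} * exp (min (s0 * z - s0\<^sup>2 * t / 2) (s1 * z - s1\<^sup>2 * t / 2)) \<le> H 0 z t"
proof -
  have "exp (min (s0 * z - s0\<^sup>2 * t / 2) (s1 * z - s1\<^sup>2 * t / 2)) * measure \<mu> {s0..s1} \<le> H 0 z t"
    unfolding H_def
  proof (rule measure_mult_le_integral)
    fix y assume "y \<in> {s0..s1}"
    then show "exp (min (s0 * z - s0\<^sup>2 * t / 2) (s1 * z - s1\<^sup>2 * t / 2)) \<le> y ^ 0 * exp (y * z - y\<^sup>2 * t / 2)"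
      using quadratic_exponent_ge_min_endpoints[OF t, of s0 y s1 z] by simp
  qed (use integrable_H_integrand[OF t, of 0 z] sets_mu in auto)
  then show ?thesis by (simp add: mult.commute)
qed

section \<open>The left end point of the support\<close>

definition left_end :: real where
  "left_end = Inf {y. y \<ge> 0 \<and> emeasure \<mu> {0<..y} > 0}"

lemma emeasure_atMost_eq:
  assumes "y \<ge> 0"
  shows "emeasure \<mu> {..y} = emeasure \<mu> {0<..y}"
proof -
  have "{..y} = {..0} \<union> {0<..y}"
    using assms by auto
  moreover have "emeasure \<mu> ({..0} \<union> {0<..y}) = emeasure \<mu> {..0} + emeasure \<mu> {0<..y}"
    using sets_mu by (intro plus_emeasure[symmetric]) auto
  ultimately show ?thesis
    using supp by simp
qed

lemma left_end_set_nonempty: "{y. y \<ge> 0 \<and> emeasure \<mu> {0<..y} > 0} \<noteq> {}"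
proof
  assume "{y. y \<ge> 0 \<and> emeasure \<mu> {0<..y} > 0} = {}"
  then have "emeasure \<mu> {..real n} = 0" for n
    using emeasure_atMost_eq[of "real n"] by auto
  then have "emeasure \<mu> (\<Union>n. {..real n}) = 0"
    using sets_mu by (intro emeasure_UN_eq_0) auto
  moreover have "(\<Union>n. {..real n}) = space \<mu>"
    using real_arch_simple by (auto simp: space_eq_UNIV)
  ultimately show False
    using nonzero by simp
qed

lemma left_end_set_bdd_below: "bdd_below {y. y \<ge> 0 \<and> emeasure \<mu> {0<..y} > 0}"
  by (rule bdd_belowI[of _ 0]) auto

lemma left_end_nonneg: "left_end \<ge> 0"
  unfolding left_end_def using left_end_set_nonempty by (intro cInf_greatest) auto

lemma emeasure_lessThan_left_end: "emeasure \<mu> {..<left_end} = 0"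
proof (rule emeasure_lessThan_eq_0[OF sets_mu])
  fix y assume y: "y < left_end"
  show "emeasure \<mu> {..y} = 0"
  proof (cases "y \<ge> 0")
    case True
    have "y \<notin> {y. y \<ge> 0 \<and> emeasure \<mu> {0<..y} > 0}"
      using y cInf_lower[OF _ left_end_set_bdd_below] unfolding left_end_def by force
    then show ?thesis
      using True emeasure_atMost_eq by simp
  next
    case False
    then have "emeasure \<mu> {..y} \<le> emeasure \<mu> {..0}"
      using sets_mu by (intro emeasure_mono) auto
    then show ?thesis
      using supp by simp
  qed
qed

lemma AE_ge_left_end: "AE y in \<mu>. left_end \<le> y"
proof (rule AE_I'[of "{..<left_end}"])
  show "{..<left_end} \<in> null_sets \<mu>"
    using emeasure_lessThan_left_end sets_mu by (intro null_setsI) auto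
qed auto

lemma measure_interval_near_left_end_pos:
  assumes "\<eta> > 0"
  obtains s0 s1 where "0 < s0" "left_end \<le> s0" "s0 \<le> s1" "s1 \<le> left_end + \<eta>"
    "measure \<mu> {s0..s1} > 0"
proof -
  obtain x where x: "x \<ge> 0" "emeasure \<mu> {0<..x} > 0" "x < left_end + \<eta>"
    using cInf_less_iff[OF left_end_set_nonempty left_end_set_bdd_below, of "left_end + \<eta>"] assms
    unfolding left_end_def by auto
  define A where "A n = {max left_end (1 / Suc n)..x}" for n :: nat
  have "\<exists>n. emeasure \<mu> (A n) \<noteq> 0"
  proof (rule ccontr)
    assume "\<not> ?thesis"
    then have null: "emeasure \<mu> (\<Union>n. A n) = 0"
      using sets_mu by (intro emeasure_UN_eq_0) (auto simp: A_def)
    have "{0<..x} \<subseteq> {..<left_end} \<union> (\<Union>n. A n)"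
    proof
      fix y assume y: "y \<in> {0<..x}"
      show "y \<in> {..<left_end} \<union> (\<Union>n. A n)"
      proof (cases "y < left_end")
        case False
        obtain n where "inverse (real (Suc n)) < y"
          using y reals_Archimedean by auto
        then have "y \<in> A n"
          using False y by (auto simp: A_def field_simps)
        then show ?thesis by auto
      qed auto
    qed
    then have "emeasure \<mu> {0<..x} \<le> emeasure \<mu> ({..<left_end} \<union> (\<Union>n. A n))"
      using sets_mu by (intro emeasure_mono) (auto simp: A_def)
    also have "\<dots> \<le> emeasure \<mu> {..<left_end} + emeasure \<mu> (\<Union>n. A n)"
      using sets_mu by (intro emeasure_subadditive) (auto simp: A_def)
    finally show False
      using null emeasure_lessThan_left_end x by simp
  qed
  then obtain n where n: "emeasure \<mu> (A n) \<noteq> 0"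
    by blast
  then have "max left_end (1 / Suc n) \<le> x"
    unfolding A_def by (metis atLeastatMost_empty emeasure_empty linorder_not_le)
  moreover have "measure \<mu> (A n) > 0"
    using n by (simp add: emeasure_eq_measure measure_nonneg order_less_le)
  moreover have "0 < max left_end (1 / Suc n)"
    by (simp add: less_max_iff_disj)
  ultimately show ?thesis
    using x that[of "max left_end (1 / Suc n)" x] unfolding A_def by simp
qed

section \<open>Inverting \<open>h\<close> in \<open>z\<close>\<close>

lemma H0_tendsto_0_at_bot:
  assumes t: "t \<ge> 0"
  shows "((\<lambda>z. H 0 z t) \<longlongrightarrow> 0) at_bot"
proof -
  have "((\<lambda>r. \<integral>y. y ^ 0 * exp (y * (- r) - y\<^sup>2 * t / 2) \<partial>\<mu>) \<longlongrightarrow> (\<integral>y. 0 \<partial>\<mu>)) at_top"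
  proof (rule integral_dominated_convergence_at_top[where w = "\<lambda>y. 1"])
    show "(\<lambda>y. y ^ 0 * exp (y * (- r) - y\<^sup>2 * t / 2)) \<in> borel_measurable \<mu>" for r
      unfolding borel_measurable_mu_iff by measurable
    show "AE y in \<mu>. ((\<lambda>r. y ^ 0 * exp (y * (- r) - y\<^sup>2 * t / 2)) \<longlongrightarrow> 0) at_top"
      using AE_pos
    proof eventually_elim
      case (elim y)
      have "y * (- r) - y\<^sup>2 * t / 2 = - (y\<^sup>2 * t / 2) - y * r" for r
        by linarith
      then show ?case
        using tendsto_exp_linear_0[OF elim, of "- (y\<^sup>2 * t / 2)"] by (simp only: power_0 mult_1)
    qed
    show "\<forall>\<^sub>F r in at_top. AE y in \<mu>. norm (y ^ 0 * exp (y * (- r) - y\<^sup>2 * t / 2)) \<le> 1"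
      using eventually_ge_at_top[of 0]
    proof eventually_elim
      case (elim r)
      show ?case
        using AE_pos
      proof eventually_elim
        case (elim y)
        have "0 \<le> y * r" "0 \<le> y\<^sup>2 * t / 2"
          using \<open>r \<ge> 0\<close> elim t by simp_all
        then show ?case by simp
      qed
    qed
  qed simp_all
  then show ?thesis
    unfolding filterlim_at_bot_mirror H_def by simp
qed

lemma filterlim_H0_at_top:
  assumes t: "t \<ge> 0"
  shows "filterlim (\<lambda>z. H 0 z t) at_top at_top"
proof -
  obtain s0 s1 where s: "0 < s0" "s0 \<le> s1" "measure \<mu> {s0..s1} > 0"
    using measure_interval_near_left_end_pos[of 1] by (metis zero_less_one)
  define m where "m = measure \<mu> {s0..s1}"
  have "filterlim (\<lambda>z. m * exp (s0 * z + - (s1\<^sup>2 * t / 2))) at_top at_top"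
    using s(3) unfolding m_def
    by (intro filterlim_tendsto_pos_mult_at_top[OF tendsto_const _ filterlim_exp_linear_at_top[OF s(1)]])
  moreover have "\<forall>\<^sub>F z in at_top. m * exp (s0 * z + - (s1\<^sup>2 * t / 2)) \<le> H 0 z t"
    using eventually_ge_at_top[of 0]
  proof eventually_elim
    case (elim z)
    have "s0\<^sup>2 * t \<le> s1\<^sup>2 * t"
      using s t by (intro mult_right_mono power_mono) auto
    moreover have "s0 * z \<le> s1 * z"
      using s elim by (intro mult_right_mono) auto
    ultimately have "exp (s0 * z + - (s1\<^sup>2 * t / 2))
        \<le> exp (min (s0 * z - s0\<^sup>2 * t / 2) (s1 * z - s1\<^sup>2 * t / 2))"
      by simp
    then have "m * exp (s0 * z + - (s1\<^sup>2 * t / 2))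
        \<le> m * exp (min (s0 * z - s0\<^sup>2 * t / 2) (s1 * z - s1\<^sup>2 * t / 2))"
      unfolding m_def by (intro mult_left_mono) auto
    then show ?case
      using H0_ge_measure_mult_exp[OF t s(2), of z] unfolding m_def by linarith
  qed
  ultimately show ?thesis
    by (rule filterlim_at_top_mono)
qed

lemma H0_surj:
  assumes t: "t \<ge> 0" and x: "x > 0"
  shows "\<exists>z. H 0 z t = x"
proof -
  obtain z1 where z1: "H 0 z1 t < x"
    using order_tendstoD(2)[OF H0_tendsto_0_at_bot[OF t] x] eventually_happens' by force
  obtain z2 where z2: "H 0 z2 t > x"
    using filterlim_H0_at_top[OF t] unfolding filterlim_at_top_dense
    using eventually_happens' by force
  have "z1 < z2"
    using strict_mono_less_eq[OF strict_mono_H[OF t, of 0], of z2 z1] z1 z2 by auto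
  moreover have "continuous_on {z1..z2} (\<lambda>z. H 0 z t)"
    using continuous_on_H[OF t] by (rule continuous_on_subset) simp
  ultimately show ?thesis
    using IVT'[of "\<lambda>z. H 0 z t" z1 x z2] z1 z2 by auto
qed

definition hinv :: "real \<Rightarrow> real \<Rightarrow> real" where
  "hinv x t = (SOME z. H 0 z t = x)"

lemma H0_hinv: "t \<ge> 0 \<Longrightarrow> x > 0 \<Longrightarrow> H 0 (hinv x t) t = x"
  unfolding hinv_def using H0_surj by (rule someI_ex)

lemma filterlim_hinv_at_top:
  assumes t: "t \<ge> 0"
  shows "filterlim (\<lambda>x. hinv x t) at_top at_top"
  unfolding filterlim_at_top
proof
  fix M :: real
  show "\<forall>\<^sub>F x in at_top. M \<le> hinv x t"
    using eventually_ge_at_top[of "max 1 (H 0 M t)"]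
  proof eventually_elim
    case (elim x)
    then have "H 0 M t \<le> H 0 (hinv x t) t"
      using H0_hinv[OF t, of x] by simp
    then show "M \<le> hinv x t"
      using strict_mono_less_eq[OF strict_mono_H[OF t, of 0]] by blast
  qed
qed

section \<open>Prudence in terms of \<open>h\<close>\<close>

lemma prudence_H:
  assumes smooth: "smooth_quadrant u" and t: "t \<ge> 0"
    and rel: "\<And>z. ux u (H 0 z t) t = exp (- z + t / 2)"
  shows "prudence u (H 0 z t) t = H 0 z t * (H 1 z t + H 2 z t) / (H 1 z t)\<^sup>2"
proof -
  note d_ux = smooth_quadrant_has_derivative_ux[OF smooth H_pos[OF t] t]
  have dH0: "((\<lambda>z. H 0 z t) has_real_derivative H 1 z t) (at z)" for z
    using has_real_derivative_H[OF t, of 0 z] by simp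
  have dH1: "((\<lambda>z. H 1 z t) has_real_derivative H 2 z t) (at z)" for z
    using has_real_derivative_H[OF t, of 1 z] by (simp add: numeral_2_eq_2)
  have first: "uxx u (H 0 z t) t * H 1 z t = - exp (- z + t / 2)" for z
  proof (rule DERIV_unique)
    show "((\<lambda>z. ux u (H 0 z t) t) has_real_derivative uxx u (H 0 z t) t * H 1 z t) (at z)"
      by (rule DERIV_chain2[OF d_ux(1) dH0])
    show "((\<lambda>z. ux u (H 0 z t) t) has_real_derivative - exp (- z + t / 2)) (at z)"
      unfolding rel by (auto intro!: derivative_eq_intros)
  qed
  have second: "uxxx u (H 0 z t) t * (H 1 z t)\<^sup>2 + uxx u (H 0 z t) t * H 2 z t = exp (- z + t / 2)"
  proof (rule DERIV_unique)
    show "((\<lambda>z. uxx u (H 0 z t) t * H 1 z t) has_real_derivative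
        uxxx u (H 0 z t) t * (H 1 z t)\<^sup>2 + uxx u (H 0 z t) t * H 2 z t) (at z)"
      by (rule DERIV_cong[OF DERIV_mult[OF DERIV_chain2[OF d_ux(2) dH0] dH1]])
        (simp add: power2_eq_square)
    show "((\<lambda>z. uxx u (H 0 z t) t * H 1 z t) has_real_derivative exp (- z + t / 2)) (at z)"
      unfolding first by (auto intro!: derivative_eq_intros)
  qed
  define e where "e = exp (- z + t / 2)"
  have pos: "H 1 z t > 0" "e > 0"
    using H_pos[OF t] unfolding e_def by auto
  have uxx: "uxx u (H 0 z t) t = - e / H 1 z t"
    using first[of z] pos unfolding e_def by (simp add: field_simps)
  have uxxx: "uxxx u (H 0 z t) t = e * (H 1 z t + H 2 z t) / (H 1 z t) ^ 3"
    using second pos unfolding uxx e_def[symmetric] by (simp add: field_simps power2_eq_square power3_eq_cube)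
  show ?thesis
    using pos unfolding prudence_def uxx uxxx by (simp add: field_simps power2_eq_square power3_eq_cube)
qed

lemma prudence_hinv:
  assumes smooth: "smooth_quadrant u" and t: "t \<ge> 0" and x: "x > 0"
    and rel: "\<And>z. ux u (H 0 z t) t = exp (- z + t / 2)"
  shows "prudence u x t = x * (H 1 (hinv x t) t + H 2 (hinv x t) t) / (H 1 (hinv x t) t)\<^sup>2"
  using prudence_H[OF smooth t rel, of "hinv x t"] H0_hinv[OF t x] by simp

lemma prudence_pos:
  assumes smooth: "smooth_quadrant u" and t: "t \<ge> 0" and x: "x > 0"
    and rel: "\<And>z. ux u (H 0 z t) t = exp (- z + t / 2)"
  shows "prudence u x t > 0"
  unfolding prudence_hinv[OF smooth t x rel]
  using H_pos[OF t] x by (intro divide_pos_pos mult_pos_pos add_pos_pos zero_less_power) auto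

section \<open>Large wealth: the limit in \<open>x\<close>\<close>

lemma H0_mult_exp_tendsto_1:
  assumes rel: "\<And>z. ux u (H 0 z 0) 0 = exp (- z)" and gam: "\<gamma> < 1"
    and lim: "((\<lambda>x. ux u x 0 / x powr (\<gamma> - 1)) \<longlongrightarrow> 1) at_top"
  shows "((\<lambda>z. H 0 z 0 * exp (- (z / (1 - \<gamma>)))) \<longlongrightarrow> 1) at_top"
proof -
  define g where "g z = H 0 z 0 * exp (- (z / (1 - \<gamma>)))" for z
  have g_pos: "g z > 0" for z
    unfolding g_def using H_pos[of 0] by simp
  have "ux u (H 0 z 0) 0 / H 0 z 0 powr (\<gamma> - 1) = g z powr (1 - \<gamma>)" for z
  proof -
    have "g z powr (1 - \<gamma>) = H 0 z 0 powr (1 - \<gamma>) * exp (- z)"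
      using gam H_pos[of 0 0 z] unfolding g_def by (simp add: powr_mult exp_powr_real)
    then show ?thesis
      using rel[of z] powr_minus[of "H 0 z 0" "\<gamma> - 1"] by (simp add: divide_inverse mult.commute)
  qed
  then have "((\<lambda>z. g z powr (1 - \<gamma>)) \<longlongrightarrow> 1) at_top"
    using filterlim_compose[OF lim filterlim_H0_at_top[of 0]] by simp
  then have "((\<lambda>z. (g z powr (1 - \<gamma>)) powr (1 / (1 - \<gamma>))) \<longlongrightarrow> 1 powr (1 / (1 - \<gamma>))) at_top"
    by (intro tendsto_powr) auto
  moreover have "(g z powr (1 - \<gamma>)) powr (1 / (1 - \<gamma>)) = g z" for z
    using g_pos[of z] gam by (simp add: powr_powr)
  ultimately show ?thesis
    unfolding g_def by simp
qed

lemma AE_le_if_H0_mult_exp_bounded: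
  assumes bounded: "\<forall>\<^sub>F z in at_top. H 0 z 0 * exp (- (b * z)) \<le> C"
  shows "AE y in \<mu>. y \<le> b"
proof (rule AE_I'[of "{b<..}"])
  have "emeasure \<mu> {c..} = 0" if c: "b < c" for c
  proof (rule ccontr)
    assume "emeasure \<mu> {c..} \<noteq> 0"
    then have m: "measure \<mu> {c..} > 0"
      by (simp add: emeasure_eq_measure measure_nonneg order_less_le)
    have "filterlim (\<lambda>z. measure \<mu> {c..} * exp ((c - b) * z + 0)) at_top at_top"
      using m c by (intro filterlim_tendsto_pos_mult_at_top[OF tendsto_const _ filterlim_exp_linear_at_top]) auto
    moreover have "\<forall>\<^sub>F z in at_top. measure \<mu> {c..} * exp ((c - b) * z + 0) \<le> H 0 z 0 * exp (- (b * z))"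
      using eventually_ge_at_top[of 0]
    proof eventually_elim
      case (elim z)
      have "exp ((c - b) * z) * measure \<mu> {c..} \<le> (\<integral>y. exp (y * z - y\<^sup>2 * 0 / 2) * exp (- (b * z)) \<partial>\<mu>)"
      proof (rule measure_mult_le_integral)
        show "integrable \<mu> (\<lambda>y. exp (y * z - y\<^sup>2 * 0 / 2) * exp (- (b * z)))"
          using integrable_H_integrand[of 0 0 z] by simp
        fix y assume "y \<in> {c..}"
        then have "(c - b) * z \<le> (y - b) * z"
          using elim by (intro mult_right_mono) auto
        then show "exp ((c - b) * z) \<le> exp (y * z - y\<^sup>2 * 0 / 2) * exp (- (b * z))"
          by (simp add: exp_add[symmetric] algebra_simps)
      qed (use sets_mu in auto)
      then show ?case
        unfolding H_def by (simp add: mult.commute)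
    qed
    ultimately have "filterlim (\<lambda>z. H 0 z 0 * exp (- (b * z))) at_top at_top"
      by (rule filterlim_at_top_mono)
    then have "\<forall>\<^sub>F z in at_top. H 0 z 0 * exp (- (b * z)) \<ge> C + 1"
      by (simp add: filterlim_at_top)
    from eventually_conj[OF bounded this] obtain z
      where "H 0 z 0 * exp (- (b * z)) \<le> C" "C + 1 \<le> H 0 z 0 * exp (- (b * z))"
      using eventually_happens' by force
    then show False
      by linarith
  qed
  then show "{b<..} \<in> null_sets \<mu>"
    using emeasure_greaterThan_eq_0[OF sets_mu] sets_mu by (intro null_setsI) auto
qed auto

lemma H_mult_exp_tendsto_atom:
  assumes b: "b > 0" and le: "AE y in \<mu>. y \<le> b" and t: "t \<ge> 0"
  shows "((\<lambda>z. H k z t * exp (b\<^sup>2 * t / 2 - b * z)) \<longlongrightarrow> b ^ k * measure \<mu> {b}) at_top"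
proof -
  have integrand: "y ^ k * exp (y * z - y\<^sup>2 * t / 2) * exp (b\<^sup>2 * t / 2 - b * z)
      = y ^ k * exp ((b\<^sup>2 - y\<^sup>2) * t / 2 - (b - y) * z)" for y z
    by (simp add: mult.assoc exp_add[symmetric] field_simps)
  have "((\<lambda>z. \<integral>y. y ^ k * exp ((b\<^sup>2 - y\<^sup>2) * t / 2 - (b - y) * z) \<partial>\<mu>)
      \<longlongrightarrow> (\<integral>y. b ^ k * indicator {b} y \<partial>\<mu>)) at_top"
  proof (rule integral_dominated_convergence_at_top[where w = "\<lambda>y. b ^ k * exp (b\<^sup>2 * t / 2)"])
    show "(\<lambda>y. b ^ k * indicator {b} y) \<in> borel_measurable \<mu>"
      unfolding borel_measurable_mu_iff by measurable
    show "(\<lambda>y. y ^ k * exp ((b\<^sup>2 - y\<^sup>2) * t / 2 - (b - y) * z)) \<in> borel_measurable \<mu>" for z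
      unfolding borel_measurable_mu_iff by measurable
    show "AE y in \<mu>. ((\<lambda>z. y ^ k * exp ((b\<^sup>2 - y\<^sup>2) * t / 2 - (b - y) * z))
        \<longlongrightarrow> b ^ k * indicator {b} y) at_top"
      using AE_pos le by eventually_elim (rule tendsto_power_exp_gap)
    show "\<forall>\<^sub>F z in at_top. AE y in \<mu>.
        norm (y ^ k * exp ((b\<^sup>2 - y\<^sup>2) * t / 2 - (b - y) * z)) \<le> b ^ k * exp (b\<^sup>2 * t / 2)"
      using eventually_ge_at_top[of 0]
    proof eventually_elim
      case (elim z)
      show ?case
        using AE_pos le by eventually_elim (rule power_exp_gap_le[OF _ _ elim t])
    qed
  qed simp
  then show ?thesis
    unfolding H_def integrand[symmetric] integral_mult_left_zero
    by (simp add: space_eq_UNIV mult.assoc)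
qed

lemma prudence_limit_at_top_wealth:
  assumes smooth: "smooth_quadrant u"
    and rel: "\<And>z t. t \<ge> 0 \<Longrightarrow> ux u (H 0 z t) t = exp (- z + t / 2)"
    and gam: "\<gamma> < 1" and lim: "((\<lambda>x. ux u x 0 / x powr (\<gamma> - 1)) \<longlongrightarrow> 1) at_top"
    and t: "t \<ge> 0"
  shows "((\<lambda>x. prudence u x t) \<longlongrightarrow> 2 - \<gamma>) at_top"
proof -
  define b where "b = 1 / (1 - \<gamma>)"
  have b: "b > 0" "1 / b = 1 - \<gamma>"
    using gam unfolding b_def by auto
  have H0_lim: "((\<lambda>z. H 0 z 0 * exp (- (b * z))) \<longlongrightarrow> 1) at_top"
    using H0_mult_exp_tendsto_1[OF _ gam lim] rel[of 0] unfolding b_def by simp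
  have le: "AE y in \<mu>. y \<le> b"
    using order_tendstoD(2)[OF H0_lim, of 2]
    by (intro AE_le_if_H0_mult_exp_bounded[where C = 2]) (auto elim: eventually_mono)
  have "((\<lambda>z. H 0 z 0 * exp (- (b * z))) \<longlongrightarrow> measure \<mu> {b}) at_top"
    using H_mult_exp_tendsto_atom[OF b(1) le order_refl, of 0] by simp
  then have "measure \<mu> {b} = 1"
    using tendsto_unique[OF _ _ H0_lim] by simp
  then have L: "((\<lambda>z. H k z t * exp (b\<^sup>2 * t / 2 - b * z)) \<longlongrightarrow> b ^ k) at_top" for k
    using H_mult_exp_tendsto_atom[OF b(1) le t, of k] by simp
  define S where "S z = exp (b\<^sup>2 * t / 2 - b * z)" for z
  define P where "P z = H 0 z t * (H 1 z t + H 2 z t) / (H 1 z t)\<^sup>2" for z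
  have P_scaled: "P z = (H 0 z t * S z) * (H 1 z t * S z + H 2 z t * S z) / (H 1 z t * S z)\<^sup>2" for z
    unfolding P_def S_def using H_pos[OF t, of 1 z] by (simp add: field_simps power2_eq_square)
  have "((\<lambda>z. (H 0 z t * S z) * (H 1 z t * S z + H 2 z t * S z) / (H 1 z t * S z)\<^sup>2)
      \<longlongrightarrow> 1 * (b + b\<^sup>2) / b\<^sup>2) at_top"
    using L[of 0] L[of 1] L[of 2] b unfolding S_def
    by (intro tendsto_divide tendsto_mult tendsto_add tendsto_power) auto
  moreover have "1 * (b + b\<^sup>2) / b\<^sup>2 = 1 + 1 / b"
    using b by (simp add: field_simps power2_eq_square)
  ultimately have "(P \<longlongrightarrow> 2 - \<gamma>) at_top"
    unfolding P_scaled b(2) by simp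
  then have "((\<lambda>x. P (hinv x t)) \<longlongrightarrow> 2 - \<gamma>) at_top"
    by (rule filterlim_compose[OF _ filterlim_hinv_at_top[OF t]])
  moreover have "\<forall>\<^sub>F x in at_top. P (hinv x t) = prudence u x t"
    using eventually_gt_at_top[of 0]
    by eventually_elim (simp add: P_def prudence_hinv[OF smooth t _ rel[OF t]] H0_hinv[OF t])
  ultimately show ?thesis
    by (rule Lim_transform_eventually)
qed

section \<open>Long horizon: the limit in \<open>t\<close>\<close>

lemma H_ge_left_end_power:
  assumes t: "t \<ge> 0"
  shows "left_end ^ k * H 0 z t \<le> H k z t"
proof -
  have "left_end ^ k * H 0 z t = (\<integral>y. left_end ^ k * exp (y * z - y\<^sup>2 * t / 2) \<partial>\<mu>)"
    unfolding H_def by simp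
  also have "\<dots> \<le> H k z t"
    unfolding H_def
  proof (rule integral_mono_AE)
    show "AE y in \<mu>. left_end ^ k * exp (y * z - y\<^sup>2 * t / 2) \<le> y ^ k * exp (y * z - y\<^sup>2 * t / 2)"
      using AE_ge_left_end
    proof eventually_elim
      case (elim y)
      then have "left_end ^ k \<le> y ^ k"
        using left_end_nonneg by (intro power_mono) auto
      then show ?case by simp
    qed
  qed (use integrable_H_integrand[OF t, of 0 z] integrable_H_integrand[OF t] in auto)
  finally show ?thesis .
qed

lemma H_le_split:
  assumes t: "t \<ge> 0" and c: "c \<ge> 0" and B: "B \<ge> 0"
    and tail: "\<And>y. y \<ge> c \<Longrightarrow> exp (y * z - y\<^sup>2 * t / 2) \<le> B"
  shows "H k z t \<le> c ^ k * H 0 z t + B * (\<integral>y. y ^ k \<partial>\<mu>)"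
proof -
  have int_moment: "integrable \<mu> (\<lambda>y. y ^ k)"
    using integrable_power_exp[of k 0] by simp
  have int0: "integrable \<mu> (\<lambda>y. exp (y * z - y\<^sup>2 * t / 2))"
    using integrable_H_integrand[OF t, of 0 z] by simp
  have "H k z t \<le> (\<integral>y. c ^ k * exp (y * z - y\<^sup>2 * t / 2) + B * y ^ k \<partial>\<mu>)"
    unfolding H_def
  proof (rule integral_mono_AE)
    show "AE y in \<mu>. y ^ k * exp (y * z - y\<^sup>2 * t / 2) \<le> c ^ k * exp (y * z - y\<^sup>2 * t / 2) + B * y ^ k"
      using AE_pos
    proof eventually_elim
      case (elim y)
      show ?case
      proof (cases "y \<ge> c")
        case True
        then have "y ^ k * exp (y * z - y\<^sup>2 * t / 2) \<le> y ^ k * B"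
          using tail elim by (intro mult_left_mono) auto
        then show ?thesis
          using c by (simp add: mult.commute add_increasing)
      next
        case False
        then have "y ^ k * exp (y * z - y\<^sup>2 * t / 2) \<le> c ^ k * exp (y * z - y\<^sup>2 * t / 2)"
          using elim by (intro mult_right_mono power_mono) auto
        then show ?thesis
          using B elim by (simp add: add_increasing2)
      qed
    qed
  qed (use integrable_H_integrand[OF t] int_moment int0 in auto)
  also have "\<dots> = c ^ k * H 0 z t + B * (\<integral>y. y ^ k \<partial>\<mu>)"
    unfolding H_def using int_moment int0 by simp
  finally show ?thesis .
qed

lemma H0_ge_exp_near_left_end:
  assumes "\<delta> > 0"
  obtains m s0 where "m > 0" "s0 > 0"
    "\<And>z t. t \<ge> 0 \<Longrightarrow> \<exists>s. s0 \<le> s \<and> left_end \<le> s \<and> s \<le> left_end + \<delta> \<and>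
        m * exp (s * z - s\<^sup>2 * t / 2) \<le> H 0 z t"
proof -
  obtain s0 s1 where s: "0 < s0" "left_end \<le> s0" "s0 \<le> s1" "s1 \<le> left_end + \<delta>"
    "measure \<mu> {s0..s1} > 0"
    using measure_interval_near_left_end_pos[OF assms] by blast
  have "\<exists>s. s0 \<le> s \<and> left_end \<le> s \<and> s \<le> left_end + \<delta> \<and>
      measure \<mu> {s0..s1} * exp (s * z - s\<^sup>2 * t / 2) \<le> H 0 z t" if "t \<ge> 0" for z t
    using H0_ge_measure_mult_exp[OF that s(3), of z] s unfolding min_def
    by (cases "s0 * z - s0\<^sup>2 * t / 2 \<le> s1 * z - s1\<^sup>2 * t / 2") (auto intro: exI[of _ s0] exI[of _ s1])
  then show ?thesis
    using that s by blast
qed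

lemma eventually_hinv_le:
  assumes x0: "x0 > 0" and \<delta>: "\<delta> > 0"
  shows "\<forall>\<^sub>F t in at_top. hinv x0 t \<le> (left_end + \<delta>) * t"
proof -
  obtain m s0 where m: "m > 0" and s0: "s0 > 0"
    and low: "\<And>z t. t \<ge> 0 \<Longrightarrow> \<exists>s. s0 \<le> s \<and> left_end \<le> s \<and> s \<le> left_end + \<delta> / 2 \<and>
        m * exp (s * z - s\<^sup>2 * t / 2) \<le> H 0 z t"
    using H0_ge_exp_near_left_end[of "\<delta> / 2"] \<delta> by (metis half_gt_zero)
  have "filterlim (\<lambda>t. m * exp (s0 * \<delta> / 2 * t + 0)) at_top at_top"
    using m s0 \<delta> by (intro filterlim_tendsto_pos_mult_at_top[OF tendsto_const _ filterlim_exp_linear_at_top]) auto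
  then have "\<forall>\<^sub>F t in at_top. m * exp (s0 * \<delta> / 2 * t) > x0"
    by (simp add: filterlim_at_top_dense)
  then show ?thesis
    using eventually_ge_at_top[of 0]
  proof eventually_elim
    case (elim t)
    define z where "z = hinv x0 t"
    show ?case
    proof (rule ccontr)
      assume "\<not> ?case"
      then have z_gt: "z > (left_end + \<delta>) * t"
        unfolding z_def by simp
      obtain s where s: "s0 \<le> s" "left_end \<le> s" "s \<le> left_end + \<delta> / 2"
        and ms: "m * exp (s * z - s\<^sup>2 * t / 2) \<le> H 0 z t"
        using low[OF elim(2)] by blast
      have "s * t \<le> (left_end + \<delta> / 2) * t"
        using s elim(2) by (intro mult_right_mono) auto
      moreover have "0 \<le> left_end * t" "0 \<le> \<delta> * t"
        using left_end_nonneg \<delta> elim(2) by simp_all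
      ultimately have "\<delta> / 2 * t \<le> z - s * t / 2"
        using z_gt by (simp add: algebra_simps)
      then have "s0 * (\<delta> / 2 * t) \<le> s * (z - s * t / 2)"
        using s s0 \<delta> elim(2) by (intro mult_mono) auto
      then have "m * exp (s0 * \<delta> / 2 * t) \<le> m * exp (s * z - s\<^sup>2 * t / 2)"
        using m by (simp add: power2_eq_square algebra_simps)
      also have "\<dots> \<le> x0"
        using ms H0_hinv[OF elim(2) x0] unfolding z_def by simp
      finally show False
        using elim(1) by simp
    qed
  qed
qed

lemma eventually_exp_tail_le:
  assumes x0: "x0 > 0" and \<delta>: "\<delta> > 0"
  obtains C where "C \<ge> 0" "\<forall>\<^sub>F t in at_top. \<forall>y \<ge> left_end + \<delta>.
      exp (y * hinv x0 t - y\<^sup>2 * t / 2) \<le> C * exp (- (\<delta>\<^sup>2 / 8 * t))"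
proof -
  have \<delta>4: "\<delta> / 4 > 0"
    using \<delta> by simp
  then obtain m s0 where m: "m > 0"
    and low: "\<And>z t. t \<ge> 0 \<Longrightarrow> \<exists>s. s0 \<le> s \<and> left_end \<le> s \<and> s \<le> left_end + \<delta> / 4 \<and>
        m * exp (s * z - s\<^sup>2 * t / 2) \<le> H 0 z t"
    by (rule H0_ge_exp_near_left_end) blast
  have "\<forall>\<^sub>F t in at_top. \<forall>y \<ge> left_end + \<delta>.
      exp (y * hinv x0 t - y\<^sup>2 * t / 2) \<le> x0 / m * exp (- (\<delta>\<^sup>2 / 8 * t))"
    using eventually_hinv_le[OF x0 \<delta>4] eventually_ge_at_top[of 0]
  proof eventually_elim
    case (elim t)
    define z where "z = hinv x0 t"
    obtain s where s: "left_end \<le> s" "s \<le> left_end + \<delta> / 4"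
      and ms: "m * exp (s * z - s\<^sup>2 * t / 2) \<le> H 0 z t"
      using low[OF elim(2)] by blast
    have exp_s: "exp (s * z - s\<^sup>2 * t / 2) \<le> x0 / m"
      using ms H0_hinv[OF elim(2) x0] m unfolding z_def by (simp add: field_simps)
    show ?case
    proof (intro allI impI)
      fix y assume y: "y \<ge> left_end + \<delta>"
      have "exp (y * z - y\<^sup>2 * t / 2) \<le> exp ((s * z - s\<^sup>2 * t / 2) + - (\<delta>\<^sup>2 / 8 * t))"
        using quadratic_exponent_gap[OF elim(2) \<delta> s y] elim(1) unfolding z_def by simp
      also have "\<dots> \<le> x0 / m * exp (- (\<delta>\<^sup>2 / 8 * t))"
        using exp_s unfolding exp_add by (intro mult_right_mono) auto
      finally show "exp (y * hinv x0 t - y\<^sup>2 * t / 2) \<le> x0 / m * exp (- (\<delta>\<^sup>2 / 8 * t))"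
        unfolding z_def .
    qed
  qed
  then show ?thesis
    using that[of "x0 / m"] x0 m by simp
qed

lemma eventually_H_hinv_le:
  assumes x0: "x0 > 0" and \<delta>: "\<delta> > 0"
  obtains C where "\<forall>\<^sub>F t in at_top.
    H k (hinv x0 t) t \<le> (left_end + \<delta>) ^ k * x0 + C * exp (- (\<delta>\<^sup>2 / 8 * t))"
proof -
  obtain C where C: "C \<ge> 0" and tail: "\<forall>\<^sub>F t in at_top. \<forall>y \<ge> left_end + \<delta>.
      exp (y * hinv x0 t - y\<^sup>2 * t / 2) \<le> C * exp (- (\<delta>\<^sup>2 / 8 * t))"
    using eventually_exp_tail_le[OF x0 \<delta>] by blast
  have "\<forall>\<^sub>F t in at_top. H k (hinv x0 t) t
      \<le> (left_end + \<delta>) ^ k * x0 + C * (\<integral>y. y ^ k \<partial>\<mu>) * exp (- (\<delta>\<^sup>2 / 8 * t))"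
    using tail eventually_ge_at_top[of 0]
  proof eventually_elim
    case (elim t)
    have "H k (hinv x0 t) t
        \<le> (left_end + \<delta>) ^ k * H 0 (hinv x0 t) t + C * exp (- (\<delta>\<^sup>2 / 8 * t)) * (\<integral>y. y ^ k \<partial>\<mu>)"
      using elim(1) left_end_nonneg \<delta> C by (intro H_le_split[OF elim(2)]) auto
    then show ?case
      using H0_hinv[OF elim(2) x0] by (simp add: mult_ac)
  qed
  then show ?thesis
    by (rule that)
qed

lemma moment_ratio_tendsto:
  assumes x0: "x0 > 0"
  shows "((\<lambda>t. H k (hinv x0 t) t / x0) \<longlongrightarrow> left_end ^ k) at_top"
proof (rule order_tendstoI)
  fix c assume c: "c < left_end ^ k"
  show "\<forall>\<^sub>F t in at_top. c < H k (hinv x0 t) t / x0"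
    using eventually_ge_at_top[of 0]
  proof eventually_elim
    case (elim t)
    have "c * x0 < left_end ^ k * x0"
      using c x0 by simp
    also have "\<dots> \<le> H k (hinv x0 t) t"
      using H_ge_left_end_power[OF elim, of k "hinv x0 t"] H0_hinv[OF elim x0] by simp
    finally show ?case
      using x0 by (simp add: less_divide_eq)
  qed
next
  fix c assume c: "c > left_end ^ k"
  define e where "e = c - left_end ^ k"
  have e: "e > 0"
    using c unfolding e_def by simp
  obtain \<delta> where \<delta>: "\<delta> > 0" "(left_end + \<delta>) ^ k < left_end ^ k + e / 2"
    using power_add_lt_exists[of "e / 2" left_end k] e by auto
  obtain C where upper: "\<forall>\<^sub>F t in at_top.
      H k (hinv x0 t) t \<le> (left_end + \<delta>) ^ k * x0 + C * exp (- (\<delta>\<^sup>2 / 8 * t))"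
    using eventually_H_hinv_le[OF x0 \<delta>(1)] by blast
  have "((\<lambda>t. C * exp (0 - \<delta>\<^sup>2 / 8 * t)) \<longlongrightarrow> 0) at_top"
    using \<delta> by (intro tendsto_mult_right_zero tendsto_exp_linear_0) simp
  then have small: "\<forall>\<^sub>F t in at_top. C * exp (- (\<delta>\<^sup>2 / 8 * t)) < x0 * e / 2"
    using x0 e by (intro order_tendstoD(2)) auto
  show "\<forall>\<^sub>F t in at_top. H k (hinv x0 t) t / x0 < c"
    using upper small
  proof eventually_elim
    case (elim t)
    have "(left_end + \<delta>) ^ k * x0 < left_end ^ k * x0 + x0 * e / 2"
      using mult_strict_right_mono[OF \<delta>(2) x0] by (simp add: algebra_simps)
    then have "H k (hinv x0 t) t < left_end ^ k * x0 + x0 * e"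
      using elim by linarith
    then show ?case
      using x0 unfolding e_def by (simp add: divide_less_eq algebra_simps)
  qed
qed

lemma prudence_hinv_moment_ratios:
  assumes smooth: "smooth_quadrant u" and t: "t \<ge> 0" and x0: "x0 > 0"
    and rel: "\<And>z. ux u (H 0 z t) t = exp (- z + t / 2)"
  shows "prudence u x0 t
    = (H 1 (hinv x0 t) t / x0 + H 2 (hinv x0 t) t / x0) / (H 1 (hinv x0 t) t / x0)\<^sup>2"
  using prudence_hinv[OF smooth t x0 rel] H_pos[OF t, of 1 "hinv x0 t"] x0
  by (simp add: field_simps power2_eq_square)

lemma prudence_limit_at_top_horizon_pos:
  assumes smooth: "smooth_quadrant u"
    and rel: "\<And>z t. t \<ge> 0 \<Longrightarrow> ux u (H 0 z t) t = exp (- z + t / 2)"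
    and x0: "x0 > 0" and a: "left_end > 0"
  shows "((\<lambda>t. prudence u x0 t) \<longlongrightarrow> 1 + 1 / left_end) at_top"
proof -
  define m where "m k t = H k (hinv x0 t) t / x0" for k t
  have "((\<lambda>t. (m 1 t + m 2 t) / (m 1 t)\<^sup>2) \<longlongrightarrow> (left_end ^ 1 + left_end ^ 2) / (left_end ^ 1)\<^sup>2) at_top"
    unfolding m_def using a by (intro tendsto_intros moment_ratio_tendsto[OF x0]) auto
  moreover have "(left_end ^ 1 + left_end ^ 2) / (left_end ^ 1)\<^sup>2 = 1 + 1 / left_end"
    using a by (simp add: field_simps power2_eq_square)
  ultimately have lim: "((\<lambda>t. (m 1 t + m 2 t) / (m 1 t)\<^sup>2) \<longlongrightarrow> 1 + 1 / left_end) at_top"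
    by simp
  have "\<forall>\<^sub>F t in at_top. (m 1 t + m 2 t) / (m 1 t)\<^sup>2 = prudence u x0 t"
    using eventually_ge_at_top[of 0]
    by eventually_elim (simp only: m_def prudence_hinv_moment_ratios[OF smooth _ x0 rel])
  with lim show ?thesis
    by (rule Lim_transform_eventually)
qed

lemma prudence_limit_at_top_horizon_zero:
  assumes smooth: "smooth_quadrant u"
    and rel: "\<And>z t. t \<ge> 0 \<Longrightarrow> ux u (H 0 z t) t = exp (- z + t / 2)"
    and x0: "x0 > 0" and a: "left_end = 0"
  shows "filterlim (\<lambda>t. prudence u x0 t) at_top at_top"
proof (rule filterlim_at_top_mono)
  define m where "m k t = H k (hinv x0 t) t / x0" for k t
  have m_pos: "\<forall>\<^sub>F t in at_top. m k t > 0" for k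
    using eventually_ge_at_top[of 0] by eventually_elim (use H_pos x0 in \<open>auto simp: m_def\<close>)
  show "filterlim (\<lambda>t. inverse (m 1 t)) at_top at_top"
    using moment_ratio_tendsto[OF x0, of 1] m_pos[of 1] a
    unfolding m_def by (intro filterlim_inverse_at_top) auto
  show "\<forall>\<^sub>F t in at_top. inverse (m 1 t) \<le> prudence u x0 t"
    using m_pos[of 1] m_pos[of 2] eventually_ge_at_top[of 0]
  proof eventually_elim
    case (elim t)
    have "inverse (m 1 t) = m 1 t / (m 1 t)\<^sup>2"
      using elim by (simp add: power2_eq_square field_simps)
    also have "\<dots> \<le> (m 1 t + m 2 t) / (m 1 t)\<^sup>2"
      using elim by (intro divide_right_mono) auto
    finally show ?case
      using prudence_hinv_moment_ratios[OF smooth elim(3) x0 rel[OF elim(3)]] unfolding m_def by simp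
  qed
qed

end

theorem proposition10:
  fixes \<mu> :: "real measure" and u :: "real \<Rightarrow> real \<Rightarrow> real"
    and h :: "real \<Rightarrow> real \<Rightarrow> real" and a :: real
  assumes sets_mu: "sets \<mu> = sets borel"
    and fin: "finite_measure \<mu>"
    and supp: "emeasure \<mu> {..0} = 0"
    and nonzero: "emeasure \<mu> (space \<mu>) \<noteq> 0"
    and integr: "\<And>z. integrable \<mu> (\<lambda>y. y * exp (y * z))"
    and a_def: "a = Inf {y. y \<ge> 0 \<and> emeasure \<mu> {0<..y} > 0}"
    and h_def: "\<And>z t. h z t = (\<integral>y. exp (y * z - y\<^sup>2 * t / 2) \<partial>\<mu>)"
    and smooth: "smooth_quadrant u"
    and incr: "\<And>t. t \<ge> 0 \<Longrightarrow> strict_mono_on {0<..} (\<lambda>x. u x t)"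
    and conc: "\<And>t. t \<ge> 0 \<Longrightarrow> strictly_concave_on {0<..} (\<lambda>x. u x t)"
    and pde: "\<And>x t. x > 0 \<Longrightarrow> t \<ge> 0 \<Longrightarrow> ut u x t = (ux u x t)\<^sup>2 / (2 * uxx u x t)"
    and rel: "\<And>z t. t \<ge> 0 \<Longrightarrow> ux u (h z t) t = exp (- z + t / 2)"
  shows "(\<forall>x>0. \<forall>t\<ge>0. prudence u x t > 0)
    \<and> (\<forall>\<gamma>::real. \<gamma> < 1 \<longrightarrow>
         ((\<lambda>x. ux u x 0 / x powr (\<gamma> - 1)) \<longlongrightarrow> 1) at_top \<longrightarrow>
         (\<forall>t0\<ge>0. ((\<lambda>x. prudence u x t0) \<longlongrightarrow> 2 - \<gamma>) at_top))
    \<and> (\<forall>\<gamma>::real. \<gamma> < 1 \<longrightarrow> \<gamma> \<noteq> 0 \<longrightarrow>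
         (\<forall>\<gamma>'. \<gamma> < \<gamma>' \<and> \<gamma>' < 1 \<longrightarrow> ((\<lambda>x. ux u x 0 / x powr (\<gamma>' - 1)) \<longlongrightarrow> 0) at_top) \<longrightarrow>
         (\<forall>\<gamma>''. \<gamma>'' < \<gamma> \<longrightarrow> filterlim (\<lambda>x. ux u x 0 / x powr (\<gamma>'' - 1)) at_top at_top) \<longrightarrow>
         (\<forall>x0>0. (a > 0 \<longrightarrow> ((\<lambda>t. prudence u x0 t) \<longlongrightarrow> 1 + 1 / a) at_top)
                \<and> (a = 0 \<longrightarrow> filterlim (\<lambda>t. prudence u x0 t) at_top at_top)))"
proof -
  interpret exp_integrable_measure \<mu>
    using fin sets_mu supp nonzero integr
    by (simp add: exp_integrable_measure_def exp_integrable_measure_axioms_def)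
  have rel_H: "\<And>z t. t \<ge> 0 \<Longrightarrow> ux u (H 0 z t) t = exp (- z + t / 2)"
    using rel by (simp add: h_def H_def)
  have a: "a = left_end"
    unfolding a_def left_end_def ..
  have "\<forall>x>0. \<forall>t\<ge>0. prudence u x t > 0"
    using prudence_pos[OF smooth _ _ rel_H] by blast
  moreover have "\<forall>\<gamma><1. ((\<lambda>x. ux u x 0 / x powr (\<gamma> - 1)) \<longlongrightarrow> 1) at_top \<longrightarrow>
      (\<forall>t0\<ge>0. ((\<lambda>x. prudence u x t0) \<longlongrightarrow> 2 - \<gamma>) at_top)"
    using prudence_limit_at_top_wealth[OF smooth rel_H] by blast
  moreover have "\<forall>x0>0. (a > 0 \<longrightarrow> ((\<lambda>t. prudence u x0 t) \<longlongrightarrow> 1 + 1 / a) at_top)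
      \<and> (a = 0 \<longrightarrow> filterlim (\<lambda>t. prudence u x0 t) at_top at_top)"
    using prudence_limit_at_top_horizon_pos[OF smooth rel_H] prudence_limit_at_top_horizon_zero[OF smooth rel_H]
    unfolding a by blast
  ultimately show ?thesis
    by blast
qed

end
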